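(* Let $k\ge 1$. There is no deterministic exploration algorithm that, knowing $k$, having unlimited memory, but having no information on the number of sites $n$ nor on (any upper bound on) the system period $p$, solves PVG-Exploration of every feasible homogeneous PV graph with distinct site identifiers and $k$ carriers (over all numbers of sites $n\ge k$ and all periods).
   Context: A PV (periodically varying) system consists of a finite set $S$ of $n$ sites and a set $C$ of $k\le n$ carriers. Each carrier $c$ has a distinct identifier and a route $\pi(c)=\langle x_0,\dots,x_{p(c)-1}\rangle$, a finite sequence of sites (repetitions allowed) of length $p(c)\ge 1$ called its period; for any integer $j$, $\pi(c)[j]$ denotes $x_{j \bmod p(c)}$. At each time $t\in\mathbb{N}$ carrier $c$ is at site $\pi(c)[t]$ and moves to $\pi(c)[t+1]$. The PV graph $\vec G_R$ is the directed edge-labelled multigraph on $S$ with edges $(x_i,x_{i+1},i)$, $0\le i<p(c)$ (indices mod $p(c)$), for every carrier $c$. Let $p=\max_{c}p(c)$. The system is homogeneous if all carriers have the same period. In a system with ids, sites have distinct identifiers visible to the agent. An exploring agent is injected at time $0$ at a site of $\mathrm{start}(\vec G_R)=\{\pi(c)[0]:c\in C\}$. If at time $t$ the agent is at site $x$, it must either choose a carrier $c$ with $\pi(c)[t]=x$ and ride with it to $\pi(c)[t+1]$ (one move), or halt and exit; it cannot wait at a site. At each time the agent observes the identifiers of the carriers present at its current site and the identifier of the site. An exploration algorithm is a deterministic rule mapping the agent's a priori knowledge and history of observations to its next action; its execution from injection site $x$ determines a walk $\xi(x)$. A walk is a concrete cover if it visits every site. An algorithm solves PVG-Exploration of $\vec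 G_R$ if for every $x\in\mathrm{start}(\vec G_R)$, $\xi(x)$ is finite and a concrete cover. $\vec G_R$ is feasible if from the starting point of every carrier there exists a walk realizable by the agent (riding carriers and switching between carriers at the same site at the same time) that is a concrete cover. *)

theory Defs
  imports Main
begin

text \<open>A PV system is given by a finite set of sites S, a finite set of carriers C,
and routes R :: carrier \<Rightarrow> site list (route of carrier c, period = length).\<close>

type_synonym site = nat
type_synonym carrier = nat
type_synonym routes = "carrier \<Rightarrow> site list"

definition pos :: "routes \<Rightarrow> carrier \<Rightarrow> nat \<Rightarrow> site" where
  "pos R c t = R c ! (t mod length (R c))"

definition pv_system :: "site set \<Rightarrow> carrier set \<Rightarrow> routes \<Rightarrow> nat \<Rightarrow> bool" where
  "pv_system S C R k \<longleftrightarrow> finite S \<and> finite C \<and> card C = k \<and> k \<le> card S \<and>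
     (\<forall>c\<in>C. R c \<noteq> [] \<and> set (R c) \<subseteq> S)"

definition homogeneous :: "carrier set \<Rightarrow> routes \<Rightarrow> bool" where
  "homogeneous C R \<longleftrightarrow> (\<forall>c\<in>C. \<forall>d\<in>C. length (R c) = length (R d))"

definition is_walk :: "carrier set \<Rightarrow> routes \<Rightarrow> site list \<Rightarrow> bool" where
  "is_walk C R xs \<longleftrightarrow> xs \<noteq> [] \<and>
     (\<forall>i. Suc i < length xs \<longrightarrow>
        (\<exists>c\<in>C. pos R c i = xs ! i \<and> pos R c (Suc i) = xs ! Suc i))"

definition feasible :: "site set \<Rightarrow> carrier set \<Rightarrow> routes \<Rightarrow> bool" where
  "feasible S C R \<longleftrightarrow>
     (\<forall>c\<in>C. \<exists>xs. is_walk C R xs \<and> hd xs = pos R c 0 \<and> S \<subseteq> set xs)"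

text \<open>An algorithm (with arbitrary
memory, knowing k implicitly) maps the full history of observations to an action.\<close>
datatype action = Ride carrier | Halt

type_synonym observation = "site \<times> carrier set"
type_synonym algorithm = "observation list \<Rightarrow> action"

definition obs :: "carrier set \<Rightarrow> routes \<Rightarrow> site \<Rightarrow> nat \<Rightarrow> observation" where
  "obs C R x t = (x, {c \<in> C. pos R c t = x})"

definition obs_hist :: "carrier set \<Rightarrow> routes \<Rightarrow> site list \<Rightarrow> observation list" where
  "obs_hist C R xs = map (\<lambda>i. obs C R (xs ! i) i) [0..<length xs]"

text \<open>run alg C R x0 t = Some [x_0,...,x_t] if the agent, injected at x0 at time 0,
is still travelling at time t (all previous actions were legal rides);
None if it halted before time t or attempted an illegal move.\<close>
primrec run :: "algorithm \<Rightarrow> carrier set \<Rightarrow> routes \<Rightarrow> site \<Rightarrow> nat \<Rightarrow> site list option" where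
  "run alg C R x0 0 = Some [x0]"
| "run alg C R x0 (Suc t) =
     (case run alg C R x0 t of
        None \<Rightarrow> None
      | Some xs \<Rightarrow>
          (case alg (obs_hist C R xs) of
             Halt \<Rightarrow> None
           | Ride c \<Rightarrow> if c \<in> C \<and> pos R c t = last xs
                       then Some (xs @ [pos R c (Suc t)]) else None))"

definition explores :: "algorithm \<Rightarrow> site set \<Rightarrow> carrier set \<Rightarrow> routes \<Rightarrow> site \<Rightarrow> bool" where
  "explores alg S C R x0 \<longleftrightarrow>
     (\<exists>t xs. run alg C R x0 t = Some xs \<and> alg (obs_hist C R xs) = Halt \<and> S \<subseteq> set xs)"

definition solves :: "algorithm \<Rightarrow> site set \<Rightarrow> carrier set \<Rightarrow> routes \<Rightarrow> bool" where
  "solves alg S C R \<longleftrightarrow> (\<forall>c\<in>C. explores alg S C R (pos R c 0))"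

end

theory Submission
  imports Defs
begin

(* Suppose an algorithm explores every feasible
   homogeneous system with k carriers.  Run it on the ring system where every carrier
   follows the route 0,1,...,k-1: it halts at some time t, having seen only sites
   below k.  Now build a second system whose common route repeats the ring for more
   than t steps and only then visits a new site k.  Up to time t the two systems are
   indistinguishable, so the deterministic agent produces the same walk and halts at
   time t again -- without ever visiting k, although the second system is feasible. *)

lemma run_length: "run alg C R x0 t = Some xs \<Longrightarrow> length xs = Suc t"
  by (induction t arbitrary: xs) (auto split: option.splits action.splits if_splits)

lemma run_sites:
  "run alg C R x0 t = Some xs \<Longrightarrow> set xs \<subseteq> insert x0 {pos R c s | c s. True}"
  by (induction t arbitrary: xs) (fastforce split: option.splits action.splits if_splits)+

lemma run_after_halt:
  assumes "run alg C R x0 t = Some xs" and "alg (obs_hist C R xs) = Halt" and "t < t'"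
  shows "run alg C R x0 t' = None"
proof -
  have "run alg C R x0 (Suc t + d) = None" for d
    using assms(1,2) by (induction d) auto
  from this[of "t' - Suc t"] show ?thesis using assms(3) by simp
qed

lemma run_halt_unique:
  assumes "run alg C R x0 t = Some xs" and "alg (obs_hist C R xs) = Halt"
      and "run alg C R x0 t' = Some xs'" and "alg (obs_hist C R xs') = Halt"
  shows "xs' = xs"
proof -
  have "t' = t"
    using run_after_halt[OF assms(1,2), of t'] run_after_halt[OF assms(3,4), of t] assms
    by (cases t t' rule: linorder_cases) auto
  then show ?thesis using assms(1,3) by simp
qed

lemma obs_hist_agree:
  assumes "\<And>c s. s < length xs \<Longrightarrow> pos R1 c s = pos R2 c s"
  shows "obs_hist C R1 xs = obs_hist C R2 xs"
  using assms by (auto simp: obs_hist_def obs_def)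

lemma run_agree:
  assumes agree: "\<And>c s. s \<le> T \<Longrightarrow> pos R1 c s = pos R2 c s" and "t \<le> T"
  shows "run alg C R1 x0 t = run alg C R2 x0 t"
  using \<open>t \<le> T\<close>
proof (induction t)
  case 0 then show ?case by simp
next
  case (Suc t)
  then have IH: "run alg C R1 x0 t = run alg C R2 x0 t" by simp
  show ?case
  proof (cases "run alg C R2 x0 t")
    case None then show ?thesis using IH by simp
  next
    case (Some xs)
    then have "length xs = Suc t" by (rule run_length)
    then have "obs_hist C R1 xs = obs_hist C R2 xs"
      using Suc.prems by (intro obs_hist_agree agree) auto
    moreover have "pos R1 c t = pos R2 c t" "pos R1 c (Suc t) = pos R2 c (Suc t)" for c
      using Suc.prems agree by auto
    ultimately show ?thesis using IH Some by (simp split: action.splits)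
  qed
qed

lemma explores_indistinguishable:
  assumes agree: "\<And>c s. s \<le> t \<Longrightarrow> pos R1 c s = pos R2 c s"
      and run1: "run alg C R1 x0 t = Some xs" and halt1: "alg (obs_hist C R1 xs) = Halt"
      and "explores alg S C R2 x0"
  shows "S \<subseteq> set xs"
proof -
  have run2: "run alg C R2 x0 t = Some xs"
    using run_agree[OF agree, of t] run1 by simp
  have "alg (obs_hist C R2 xs) = Halt"
    using halt1 obs_hist_agree[of xs R1 R2 C] agree run_length[OF run1] by simp
  with run2 show ?thesis
    using \<open>explores alg S C R2 x0\<close> run_halt_unique unfolding explores_def by metis
qed

text \<open>If every carrier follows the same route r, the route itself is a realizable walk
  covering all sites, so the system is a feasible homogeneous instance.\<close>
lemma shared_route_instance:
  assumes "r \<noteq> []" and "k \<le> card (set r)"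
  shows "pv_system (set r) {0..<k} (\<lambda>_. r) k \<and> homogeneous {0..<k} (\<lambda>_. r)
         \<and> feasible (set r) {0..<k} (\<lambda>_. r)"
proof -
  have "is_walk {0..<k} (\<lambda>_. r) r" if "0 < k"
    using that by (auto simp: is_walk_def pos_def assms(1))
  moreover have "hd r = pos (\<lambda>_. r) c 0" for c
    using assms(1) by (simp add: pos_def hd_conv_nth)
  ultimately show ?thesis
    using assms by (auto simp: pv_system_def homogeneous_def feasible_def)
qed

lemma universal_explores_shared_route:
  assumes universal: "\<forall>S C R. pv_system S C R k \<and> homogeneous C R \<and> feasible S C R
                        \<longrightarrow> solves alg S C R"
      and "0 < k" and "r \<noteq> []" and "k \<le> card (set r)"
  shows "explores alg (set r) {0..<k} (\<lambda>_. r) (hd r)"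
proof -
  have "solves alg (set r) {0..<k} (\<lambda>_. r)"
    using universal shared_route_instance[OF assms(3,4)] by blast
  then show ?thesis
    using \<open>0 < k\<close> assms(3) by (auto simp: solves_def pos_def hd_conv_nth)
qed

lemma pos_ring: "0 < k \<Longrightarrow> pos (\<lambda>_. [0..<k]) c s = s mod k"
  by (simp add: pos_def)

text \<open>The detour route follows the ring for t+k steps and then visits the new site k;
  it has period t+k+1, so it cannot be told apart from the ring before time t+k.\<close>
definition detour_route :: "nat \<Rightarrow> nat \<Rightarrow> site list" where
  "detour_route k t = map (\<lambda>i. i mod k) [0..<t + k] @ [k]"

lemma pos_detour: "s < t + k \<Longrightarrow> pos (\<lambda>_. detour_route k t) c s = s mod k"
  by (simp add: pos_def detour_route_def nth_append)

lemma set_detour: "0 < k \<Longrightarrow> set (detour_route k t) = {0..k}"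
proof -
  assume "0 < k"
  have "(\<lambda>i. i mod k) ` {0..<t + k} = {0..<k}"
  proof
    show "(\<lambda>i. i mod k) ` {0..<t + k} \<subseteq> {0..<k}" using \<open>0 < k\<close> by auto
    show "{0..<k} \<subseteq> (\<lambda>i. i mod k) ` {0..<t + k}"
    proof
      fix j assume "j \<in> {0..<k}"
      then have "j = j mod k" and "j \<in> {0..<t + k}" by auto
      then show "j \<in> (\<lambda>i. i mod k) ` {0..<t + k}" by blast
    qed
  qed
  then show ?thesis by (auto simp: detour_route_def)
qed

theorem mainTheorem2:
  fixes k :: nat
  assumes "k \<ge> 1"
  shows "\<not> (\<exists>alg :: algorithm. \<forall>S C R.
            pv_system S C R k \<and> homogeneous C R \<and> feasible S C R \<longrightarrow> solves alg S C R)"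
proof
  assume "\<exists>alg :: algorithm. \<forall>S C R.
            pv_system S C R k \<and> homogeneous C R \<and> feasible S C R \<longrightarrow> solves alg S C R"
  then obtain alg :: algorithm where universal: "\<forall>S C R.
            pv_system S C R k \<and> homogeneous C R \<and> feasible S C R \<longrightarrow> solves alg S C R"
    by blast
  have k: "0 < k" using assms by simp
  have "explores alg {0..<k} {0..<k} (\<lambda>_. [0..<k]) 0"
    using universal_explores_shared_route[OF universal k, of "[0..<k]"] k by simp
  then obtain t xs where run: "run alg {0..<k} (\<lambda>_. [0..<k]) 0 t = Some xs"
      and halt: "alg (obs_hist {0..<k} (\<lambda>_. [0..<k]) xs) = Halt"
    unfolding explores_def by blast
  have ring_sites: "set xs \<subseteq> {0..<k}"
    using run_sites[OF run] k by (auto simp: pos_ring)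
  have detour: "explores alg {0..k} {0..<k} (\<lambda>_. detour_route k t) 0"
    using universal_explores_shared_route[OF universal k, of "detour_route k t"] k
    by (simp add: set_detour) (simp add: detour_route_def hd_map)
  have "pos (\<lambda>_. [0..<k]) c s = pos (\<lambda>_. detour_route k t) c s" if "s \<le> t" for c s
    using that k by (simp add: pos_ring pos_detour)
  then have "{0..k} \<subseteq> set xs"
    using run halt detour by (rule explores_indistinguishable)
  then have "k \<in> set xs" by auto
  with ring_sites show False by auto
qed

end
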